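(* Let $p<q$ be coprime positive integers and $m$ a positive integer such that $q-p$ divides $m$; put $a=m/(q-p)$. Let $A=\mathbb C[X_0,X_1,X_2,X_3,X_4]$ with the $\mathbb Z\times\mathbb Z/m\mathbb Z$-grading in which $X_0$ has degree $(1,0)$, $X_1,X_2$ have degree $(-p,-1)$ and $X_3,X_4$ have degree $(q,1)$. For $s\in\mathbb C$ let $$J_s=(X_0^{q-p},\;X_2,\;X_4,\;s-X_1^{aq}X_3^{ap})\subset A.$$ Then for every $s\in\mathbb C$ and every $(n,d)\in\mathbb Z\times\mathbb Z/m\mathbb Z$ one has $\dim_{\mathbb C}(A/J_s)_{(n,d)}=1$.
   Context: The grading is the weight grading for the action of $G_0\times G_m$ ($G_0\cong\mathbb C^*$, $G_m\cong\mu_m$) on $\mathbb C^5$ given by $t\cdot(x_0,\dots,x_4)=(tx_0,t^{-p}x_1,t^{-p}x_2,t^qx_3,t^qx_4)$ and $\zeta\cdot(x_0,\dots,x_4)=(x_0,\zeta^{-1}x_1,\zeta^{-1}x_2,\zeta x_3,\zeta x_4)$. The condition that $q-p$ divides $m$ is exactly the condition that the associated Popov $SL(2)$-variety $E_{p/q,m}$ is toric. *)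

theory Defs
  imports "HOL-Library.Poly_Mapping" "HOL-Library.Numeral_Type" Complex_Main
begin

type_synonym mono5 = "5 \<Rightarrow>\<^sub>0 nat"
type_synonym poly5 = "mono5 \<Rightarrow>\<^sub>0 complex"

definition X :: "5 \<Rightarrow> poly5" where
  "X i = Poly_Mapping.single (Poly_Mapping.single i 1) 1"

definition Cst :: "complex \<Rightarrow> poly5" where
  "Cst c = Poly_Mapping.single 0 c"

text \<open>Weight degree of a monomial: first component in Z, second in Z/mZ (as an integer
  representative; congruence mod m is used below).\<close>
definition deg1 :: "nat \<Rightarrow> nat \<Rightarrow> mono5 \<Rightarrow> int" where
  "deg1 p q \<alpha> = int (Poly_Mapping.lookup \<alpha> (0::5)) - int p * int (Poly_Mapping.lookup \<alpha> (1::5) + Poly_Mapping.lookup \<alpha> (2::5))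
                  + int q * int (Poly_Mapping.lookup \<alpha> (3::5) + Poly_Mapping.lookup \<alpha> (4::5))"

definition deg2 :: "mono5 \<Rightarrow> int" where
  "deg2 \<alpha> = - int (Poly_Mapping.lookup \<alpha> (1::5) + Poly_Mapping.lookup \<alpha> (2::5)) + int (Poly_Mapping.lookup \<alpha> (3::5) + Poly_Mapping.lookup \<alpha> (4::5))"

definition graded_piece :: "nat \<Rightarrow> nat \<Rightarrow> nat \<Rightarrow> int \<Rightarrow> int \<Rightarrow> poly5 set" where
  "graded_piece p q m n d =
     {f. \<forall>\<alpha>\<in>Poly_Mapping.keys f. deg1 p q \<alpha> = n \<and> deg2 \<alpha> mod int m = d mod int m}"

definition gen_ideal :: "'a::comm_ring_1 list \<Rightarrow> 'a set" where
  "gen_ideal gs = {(\<Sum>i<length gs. cs ! i * gs ! i) | cs. length cs = length gs}"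

text \<open>dim_C of the image of the subspace V in A/J equals k: there are k elements of V
  whose classes form a C-basis of (V + J)/J, i.e. they are linearly independent modulo J
  and span V modulo J.\<close>
definition quot_dim_eq :: "poly5 set \<Rightarrow> poly5 set \<Rightarrow> nat \<Rightarrow> bool" where
  "quot_dim_eq V J k \<longleftrightarrow>
     (\<exists>vs. length vs = k \<and> set vs \<subseteq> V \<and>
        (\<forall>cs. length cs = k \<longrightarrow> (\<Sum>i<k. Cst (cs ! i) * vs ! i) \<in> J \<longrightarrow> (\<forall>i<k. cs ! i = 0)) \<and>
        (\<forall>w\<in>V. \<exists>cs. length cs = k \<and> w - (\<Sum>i<k. Cst (cs ! i) * vs ! i) \<in> J))"

end

theory Submission
  imports Defs
begin

text \<open>Modulo the monomial generators \<open>X\<^sub>0\<^bsup>q-p\<^esup>, X\<^sub>2, X\<^sub>4\<close>, a monomial of degree \<open>(n, d)\<close>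
  is either zero or standard, i.e. of the form \<open>X\<^sub>0\<^bsup>i\<^esup> X\<^sub>1\<^bsup>j\<^esup> X\<^sub>3\<^bsup>k\<^esup>\<close> with \<open>i < q - p\<close>.
  The two degree conditions force the standard exponents of degree \<open>(n, d)\<close> to lie on one ray
  \<open>v + t (a q, a p)\<close>, the direction being the exponent of the invariant monomial
  \<open>M = X\<^sub>1\<^bsup>aq\<^esup> X\<^sub>3\<^bsup>ap\<^esup>\<close>. Since \<open>M \<equiv> s\<close> modulo \<open>J\<^sub>s\<close>, the monomial at step \<open>t\<close> is congruent to
  \<open>s\<^sup>t X\<^sup>v\<close>, so \<open>X\<^sup>v\<close> spans. It is nonzero modulo \<open>J\<^sub>s\<close>: the linear functional giving the ray
  monomial at step \<open>t\<close> the value \<open>s\<^sup>t\<close> and every other monomial the value \<open>0\<close> kills the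
  multiples of the monomial generators (no ray point is divisible by them) and of \<open>s - M\<close>
  (the functional is geometric along the ray, and \<open>X\<^sup>v\<close>, the lowest monomial on it, is not
  divisible by \<open>M\<close>).\<close>

lemma sum_single_lookup:
  "(\<Sum>\<alpha>\<in>Poly_Mapping.keys f. Poly_Mapping.single \<alpha> (Poly_Mapping.lookup f \<alpha>)) = f"
  by (rule poly_mapping_eqI) (simp add: lookup_sum lookup_single when_def in_keys_iff)

lemma exists_add_single_if_le_lookup:
  fixes \<beta> :: "'a \<Rightarrow>\<^sub>0 nat"
  assumes "e \<le> Poly_Mapping.lookup \<beta> k"
  shows "\<exists>\<gamma>. \<beta> = \<gamma> + Poly_Mapping.single k e"
proof
  show "\<beta> = (\<beta> - Poly_Mapping.single k e) + Poly_Mapping.single k e"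
    using assms by (intro poly_mapping_eqI) (auto simp: lookup_add lookup_minus lookup_single when_def)
qed

lemma gen_ideal_combination:
  "length cs = length gs \<Longrightarrow> (\<Sum>i<length gs. cs ! i * gs ! i) \<in> gen_ideal gs"
  unfolding gen_ideal_def by blast

lemma gen_ideal_zero: "0 \<in> gen_ideal gs"
  using gen_ideal_combination[of "replicate (length gs) 0" gs] by simp

lemma gen_ideal_add:
  assumes "x \<in> gen_ideal gs" "y \<in> gen_ideal gs"
  shows "x + y \<in> gen_ideal gs"
proof -
  obtain cs ds where "length cs = length gs" "x = (\<Sum>i<length gs. cs ! i * gs ! i)"
    and "length ds = length gs" "y = (\<Sum>i<length gs. ds ! i * gs ! i)"
    using assms unfolding gen_ideal_def by blast
  then have "x + y = (\<Sum>i<length gs. map2 (+) cs ds ! i * gs ! i)"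
    by (simp add: sum.distrib distrib_right)
  then show ?thesis
    using gen_ideal_combination[of "map2 (+) cs ds" gs] \<open>length cs = length gs\<close> \<open>length ds = length gs\<close>
    by simp
qed

lemma gen_ideal_mult_left:
  assumes "x \<in> gen_ideal gs"
  shows "r * x \<in> gen_ideal gs"
proof -
  obtain cs where "length cs = length gs" "x = (\<Sum>i<length gs. cs ! i * gs ! i)"
    using assms unfolding gen_ideal_def by blast
  then have "r * x = (\<Sum>i<length gs. map ((*) r) cs ! i * gs ! i)"
    by (simp add: sum_distrib_left mult.assoc)
  then show ?thesis
    using gen_ideal_combination[of "map ((*) r) cs" gs] \<open>length cs = length gs\<close> by simp
qed

lemma gen_ideal_generator:
  assumes "g \<in> set gs"
  shows "g \<in> gen_ideal gs"
proof -
  obtain k where k: "k < length gs" "g = gs ! k"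
    using assms by (auto simp: in_set_conv_nth)
  have "(\<Sum>i<length gs. map (\<lambda>i. if i = k then 1 else 0) [0..<length gs] ! i * gs ! i)
      = (\<Sum>i<length gs. if i = k then gs ! k else 0)"
    by (rule sum.cong) auto
  also have "\<dots> = g"
    using k by simp
  finally show ?thesis
    using gen_ideal_combination[of "map (\<lambda>i. if i = k then 1 else 0) [0..<length gs]" gs] by simp
qed

lemma gen_ideal_diff:
  assumes "x \<in> gen_ideal gs" "y \<in> gen_ideal gs"
  shows "x - y \<in> gen_ideal gs"
  using gen_ideal_add[OF assms(1) gen_ideal_mult_left[OF assms(2), of "- 1"]] by simp

lemma gen_ideal_sum:
  assumes "\<And>x. x \<in> A \<Longrightarrow> f x \<in> gen_ideal gs"
  shows "sum f A \<in> gen_ideal gs"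
  using assms by (induction A rule: infinite_finite_induct) (auto simp: gen_ideal_zero gen_ideal_add)

lemma additive_vanishes_on_gen_ideal:
  assumes "additive \<phi>" and "\<And>r g. g \<in> set gs \<Longrightarrow> \<phi> (r * g) = 0" and "x \<in> gen_ideal gs"
  shows "\<phi> x = 0"
proof -
  obtain cs where "x = (\<Sum>i<length gs. cs ! i * gs ! i)"
    using assms(3) unfolding gen_ideal_def by blast
  then show ?thesis
    using assms(2) by (simp add: additive.sum[OF assms(1)])
qed

lemma quot_dim_eq_oneI:
  assumes "u \<in> V"
    and "\<And>w. w \<in> V \<Longrightarrow> \<exists>c. w - Cst c * u \<in> J"
    and "\<And>c. Cst c * u \<in> J \<Longrightarrow> c = 0"
  shows "quot_dim_eq V J 1"
  unfolding quot_dim_eq_def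
proof (intro exI[of _ "[u]"] conjI allI impI ballI)
  fix cs :: "complex list" and i :: nat
  assume "(\<Sum>i<1. Cst (cs ! i) * [u] ! i) \<in> J" and "i < 1"
  then show "cs ! i = 0"
    using assms(3) by simp
next
  fix w assume "w \<in> V"
  then obtain c where "w - Cst c * u \<in> J"
    using assms(2) by blast
  then show "\<exists>cs. length cs = 1 \<and> w - (\<Sum>i<1. Cst (cs ! i) * [u] ! i) \<in> J"
    by (intro exI[of _ "[c]"]) simp
qed (use assms(1) in simp_all)

definition coeff_pairing :: "('a \<Rightarrow> 'b) \<Rightarrow> ('a \<Rightarrow>\<^sub>0 'b) \<Rightarrow> 'b::comm_ring_1" where
  "coeff_pairing w f = Sum_any (\<lambda>\<alpha>. Poly_Mapping.lookup f \<alpha> * w \<alpha>)"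

lemma additive_coeff_pairing: "additive (coeff_pairing w)"
proof
  have fin: "finite {\<alpha>. Poly_Mapping.lookup f \<alpha> * w \<alpha> \<noteq> 0}" for f
    by (rule finite_subset[OF _ finite_keys[of f]]) (auto simp: in_keys_iff)
  show "coeff_pairing w (f + g) = coeff_pairing w f + coeff_pairing w g" for f g
    unfolding coeff_pairing_def lookup_add distrib_right by (rule Sum_any.distrib[OF fin fin])
qed

lemma coeff_pairing_single [simp]:
  "coeff_pairing w (Poly_Mapping.single \<alpha> c) = c * w \<alpha>"
  unfolding coeff_pairing_def lookup_single by (simp add: when_mult)

lemma coeff_pairing_mult_eq_0:
  fixes g :: "'a::comm_monoid_add \<Rightarrow>\<^sub>0 'b::comm_ring_1"
  assumes "\<And>\<beta> c. coeff_pairing w (Poly_Mapping.single \<beta> c * g) = 0"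
  shows "coeff_pairing w (h * g) = 0"
proof -
  have "h * g = (\<Sum>\<beta>\<in>Poly_Mapping.keys h. Poly_Mapping.single \<beta> (Poly_Mapping.lookup h \<beta>) * g)"
    by (subst sum_single_lookup[of h, symmetric]) (simp only: sum_distrib_right)
  then show ?thesis
    using assms by (simp add: additive.sum[OF additive_coeff_pairing])
qed

lemma coeff_pairing_mult_monomial_eq_0:
  fixes \<mu> :: "'a::comm_monoid_add"
  assumes "\<And>\<beta>. w (\<beta> + \<mu>) = 0"
  shows "coeff_pairing w (h * Poly_Mapping.single \<mu> 1) = 0"
  by (rule coeff_pairing_mult_eq_0) (simp add: mult_single assms)

lemma coeff_pairing_mult_binomial_eq_0:
  fixes \<mu> :: "'a::comm_monoid_add"
  assumes "\<And>\<beta>. w (\<beta> + \<mu>) = s * w \<beta>"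
  shows "coeff_pairing w (h * (Poly_Mapping.single 0 s - Poly_Mapping.single \<mu> 1)) = 0"
  by (rule coeff_pairing_mult_eq_0)
    (simp add: right_diff_distrib mult_single assms additive.diff[OF additive_coeff_pairing])

definition geometric_weight :: "(nat \<Rightarrow> 'a) \<Rightarrow> 'b::comm_semiring_1 \<Rightarrow> 'a \<Rightarrow> 'b" where
  "geometric_weight \<rho> s \<beta> = (if \<beta> \<in> range \<rho> then s ^ the_inv \<rho> \<beta> else 0)"

lemma geometric_weight_on_ray: "inj \<rho> \<Longrightarrow> geometric_weight \<rho> s (\<rho> t) = s ^ t"
  by (simp add: geometric_weight_def the_inv_f_f)

lemma geometric_weight_off_ray: "\<beta> \<notin> range \<rho> \<Longrightarrow> geometric_weight \<rho> s \<beta> = 0"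
  by (simp add: geometric_weight_def)

lemma geometric_weight_shift:
  fixes \<rho> :: "nat \<Rightarrow> 'a::cancel_semigroup_add"
  assumes inj: "inj \<rho>" and step: "\<And>t. \<rho> (Suc t) = \<rho> t + \<mu>" and start: "\<And>\<beta>. \<rho> 0 \<noteq> \<beta> + \<mu>"
  shows "geometric_weight \<rho> s (\<beta> + \<mu>) = s * geometric_weight \<rho> s \<beta>"
proof (cases "\<beta> \<in> range \<rho>")
  case True
  then obtain t where "\<beta> = \<rho> t" by blast
  moreover have "\<rho> t + \<mu> = \<rho> (Suc t)"
    using step by simp
  ultimately show ?thesis
    by (simp add: geometric_weight_on_ray[OF inj])
next
  case False
  have "\<beta> + \<mu> \<noteq> \<rho> t" for t
    using False start[of \<beta>] step by (cases t) auto
  then have "\<beta> + \<mu> \<notin> range \<rho>" by blast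
  then show ?thesis
    using False by (simp add: geometric_weight_off_ray)
qed

lemma standard_solution_exists:
  fixes p q a n d :: int
  assumes "0 < p" and "p < q" and "0 < a"
  shows "\<exists>i j k. 0 \<le> i \<and> i < q - p \<and> 0 \<le> j \<and> 0 \<le> k \<and> i - p * j + q * k = n \<and>
                 (k - j) mod (a * (q - p)) = d mod (a * (q - p))"
proof -
  \<comment> \<open>\<open>(i, j\<^sub>0, j\<^sub>0 + d)\<close> solves both equations; \<open>N\<close> steps along \<open>(a q, a p)\<close> make it nonnegative.\<close>
  define i where "i = (n - q * d) mod (q - p)"
  define j\<^sub>0 where "j\<^sub>0 = (n - q * d) div (q - p)"
  define N where "N = \<bar>j\<^sub>0\<bar> + \<bar>d\<bar>"
  define j where "j = j\<^sub>0 + a * q * N"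
  define k where "k = j\<^sub>0 + d + a * p * N"
  have "n - q * d = (q - p) * j\<^sub>0 + i"
    by (simp add: i_def j\<^sub>0_def)
  then have deg1: "i - p * j + q * k = n"
    by (simp add: j_def k_def algebra_simps)
  have "k - j = d - N * (a * (q - p))"
    by (simp add: j_def k_def algebra_simps)
  then have deg2: "(k - j) mod (a * (q - p)) = d mod (a * (q - p))"
    by (simp add: mod_diff_right_eq[symmetric])
  have "1 \<le> a * p" "1 \<le> a * q"
    using assms by (simp_all add: zero_less_mult_iff int_one_le_iff_zero_less)
  moreover have "0 \<le> N"
    by (simp add: N_def)
  ultimately have "N \<le> a * p * N" "N \<le> a * q * N"
    by (simp_all add: mult_le_cancel_right1)
  moreover have "- j\<^sub>0 \<le> N" "- (j\<^sub>0 + d) \<le> N"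
    by (simp_all add: N_def)
  ultimately have "0 \<le> j" "0 \<le> k"
    unfolding j_def k_def by linarith+
  moreover have "0 \<le> i" "i < q - p"
    using assms by (simp_all add: i_def)
  ultimately show ?thesis
    using deg1 deg2 by blast
qed

lemma standard_solutions_differ_by_step:
  fixes p q a i j k i' j' k' :: int
  assumes "p < q"
    and "0 \<le> i" "i < q - p" "0 \<le> i'" "i' < q - p"
    and deg1: "i - p * j + q * k = i' - p * j' + q * k'"
    and deg2: "(k - j) mod (a * (q - p)) = (k' - j') mod (a * (q - p))"
  shows "i' = i \<and> (\<exists>l. j' = j + l * (a * q) \<and> k' = k + l * (a * p))"
proof -
  obtain l where l: "(k' - j') - (k - j) = a * (q - p) * l"
    using deg2 by (metis mod_eq_dvd_iff dvdE)
  have i: "i' - i = (q - p) * (- (j' - j) - q * a * l)"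
    using deg1 l by algebra
  have "i' = i"
  proof (rule ccontr)
    assume "i' \<noteq> i"
    then have "\<bar>q - p\<bar> \<le> \<bar>i' - i\<bar>"
      using i by (intro dvd_imp_le_int) auto
    then show False
      using assms by linarith
  qed
  then have "(q - p) * (- (j' - j) - q * a * l) = 0"
    using i by simp
  then have "- (j' - j) - q * a * l = 0"
    using assms(1) by simp
  then have "j' = j + (- l) * (a * q)"
    by (simp add: algebra_simps)
  moreover from this have "k' = k + (- l) * (a * p)"
    using l by algebra
  ultimately show ?thesis
    using \<open>i' = i\<close> by blast
qed

lemma exhaust_5: "(i::5) = 0 \<or> i = 1 \<or> i = 2 \<or> i = 3 \<or> i = 4"
proof -
  have "card {0::5, 1, 2, 3, 4} = card (UNIV :: 5 set)"
    by simp
  then have "{0::5, 1, 2, 3, 4} = UNIV"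
    using card_subset_eq[of "UNIV :: 5 set"] by simp
  then show ?thesis
    by blast
qed

lemma mono5_eqI:
  fixes \<alpha> \<beta> :: mono5
  assumes "\<And>k. k \<in> {0, 1, 2, 3, 4} \<Longrightarrow> Poly_Mapping.lookup \<alpha> k = Poly_Mapping.lookup \<beta> k"
  shows "\<alpha> = \<beta>"
  using assms exhaust_5 by (intro poly_mapping_eqI) blast

lemma X_power: "X i ^ k = Poly_Mapping.single (Poly_Mapping.single i k) 1"
  by (induction k) (simp_all add: X_def mult_single flip: single_add)

lemma deg1_add: "deg1 p q (\<alpha> + \<beta>) = deg1 p q \<alpha> + deg1 p q \<beta>"
  by (simp add: deg1_def lookup_add algebra_simps)

lemma deg2_add: "deg2 (\<alpha> + \<beta>) = deg2 \<alpha> + deg2 \<beta>"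
  by (simp add: deg2_def lookup_add algebra_simps)

definition invariant_exp :: "nat \<Rightarrow> nat \<Rightarrow> nat \<Rightarrow> nat \<Rightarrow> mono5" where
  "invariant_exp a p q t = Poly_Mapping.single 1 (t * (a * q)) + Poly_Mapping.single 3 (t * (a * p))"

lemma lookup_invariant_exp:
  "Poly_Mapping.lookup (invariant_exp a p q t) k =
     (if k = 1 then t * (a * q) else if k = 3 then t * (a * p) else 0)"
  by (simp add: invariant_exp_def lookup_add lookup_single when_def)

lemma invariant_exp_0 [simp]: "invariant_exp a p q 0 = 0"
  by (simp add: invariant_exp_def)

lemma invariant_exp_add: "invariant_exp a p q (t + u) = invariant_exp a p q t + invariant_exp a p q u"
  by (rule poly_mapping_eqI) (simp add: lookup_add lookup_invariant_exp algebra_simps)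

definition exps_of_degree :: "nat \<Rightarrow> nat \<Rightarrow> nat \<Rightarrow> int \<Rightarrow> int \<Rightarrow> mono5 set" where
  "exps_of_degree p q m n d = {\<alpha>. deg1 p q \<alpha> = n \<and> deg2 \<alpha> mod int m = d mod int m}"

lemma graded_piece_eq: "graded_piece p q m n d = {f. Poly_Mapping.keys f \<subseteq> exps_of_degree p q m n d}"
  by (auto simp: graded_piece_def exps_of_degree_def)

lemma add_invariant_exp_of_degree_iff:
  assumes "p \<le> q" and "m = a * (q - p)"
  shows "\<beta> + invariant_exp a p q t \<in> exps_of_degree p q m n d \<longleftrightarrow> \<beta> \<in> exps_of_degree p q m n d"
proof -
  have "deg1 p q (invariant_exp a p q t) = 0"
    by (simp add: deg1_def lookup_invariant_exp)
  moreover have "deg2 (invariant_exp a p q t) = - int t * int m"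
    using assms by (simp add: deg2_def lookup_invariant_exp of_nat_diff algebra_simps)
  ultimately show ?thesis
    by (simp add: exps_of_degree_def deg1_add deg2_add mod_diff_right_eq[symmetric])
qed

definition standard_exp :: "nat \<Rightarrow> mono5 \<Rightarrow> bool" where
  "standard_exp r \<beta> \<longleftrightarrow>
     Poly_Mapping.lookup \<beta> 0 < r \<and> Poly_Mapping.lookup \<beta> 2 = 0 \<and> Poly_Mapping.lookup \<beta> 4 = 0"

lemma standard_exp_add_invariant_exp_iff:
  "standard_exp r (\<beta> + invariant_exp a p q t) \<longleftrightarrow> standard_exp r \<beta>"
  by (simp add: standard_exp_def lookup_add lookup_invariant_exp)

lemma degrees_of_standard_exp:
  assumes "standard_exp r \<beta>"
  shows "deg1 p q \<beta> = int (Poly_Mapping.lookup \<beta> 0) - int p * int (Poly_Mapping.lookup \<beta> 1)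
                         + int q * int (Poly_Mapping.lookup \<beta> 3)"
    and "deg2 \<beta> = int (Poly_Mapping.lookup \<beta> 3) - int (Poly_Mapping.lookup \<beta> 1)"
  using assms by (simp_all add: standard_exp_def deg1_def deg2_def)

lemma standard_exp_of_degree_exists:
  assumes "0 < p" and "p < q" and "0 < a" and "m = a * (q - p)"
  shows "\<exists>\<beta>. standard_exp (q - p) \<beta> \<and> \<beta> \<in> exps_of_degree p q m n d"
proof -
  have "0 < int p" "int p < int q" "0 < int a"
    using assms by simp_all
  then obtain i j k where ijk: "0 \<le> i" "i < int q - int p" "0 \<le> j" "0 \<le> k"
    "i - int p * j + int q * k = n"
    "(k - j) mod (int a * (int q - int p)) = d mod (int a * (int q - int p))"
    using standard_solution_exists by blast
  define \<beta> :: mono5 where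
    "\<beta> = Poly_Mapping.single 0 (nat i) + Poly_Mapping.single 1 (nat j) + Poly_Mapping.single 3 (nat k)"
  have lookup_\<beta>: "Poly_Mapping.lookup \<beta> 0 = nat i" "Poly_Mapping.lookup \<beta> 1 = nat j"
    "Poly_Mapping.lookup \<beta> 2 = 0" "Poly_Mapping.lookup \<beta> 3 = nat k" "Poly_Mapping.lookup \<beta> 4 = 0"
    by (simp_all add: \<beta>_def lookup_add lookup_single)
  have "standard_exp (q - p) \<beta>"
    using ijk(1,2) by (simp add: standard_exp_def lookup_\<beta>)
  moreover have "int m = int a * (int q - int p)"
    using assms by (simp add: of_nat_diff)
  then have "\<beta> \<in> exps_of_degree p q m n d"
    using ijk degrees_of_standard_exp[OF \<open>standard_exp (q - p) \<beta>\<close>]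
    by (simp add: exps_of_degree_def lookup_\<beta>)
  ultimately show ?thesis
    by blast
qed

lemma standard_exps_of_degree_differ_by_invariant:
  assumes "p < q" and "m = a * (q - p)"
    and "standard_exp (q - p) \<beta>" "\<beta> \<in> exps_of_degree p q m n d"
    and "standard_exp (q - p) \<gamma>" "\<gamma> \<in> exps_of_degree p q m n d"
  shows "\<exists>t. \<gamma> = \<beta> + invariant_exp a p q t \<or> \<beta> = \<gamma> + invariant_exp a p q t"
proof -
  let ?i = "\<lambda>\<alpha>. int (Poly_Mapping.lookup \<alpha> 0)"
  let ?j = "\<lambda>\<alpha>. int (Poly_Mapping.lookup \<alpha> 1)"
  let ?k = "\<lambda>\<alpha>. int (Poly_Mapping.lookup \<alpha> 3)"
  have m: "int m = int a * (int q - int p)"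
    using assms by (simp add: of_nat_diff)
  have "?i \<gamma> = ?i \<beta> \<and> (\<exists>l. ?j \<gamma> = ?j \<beta> + l * (int a * int q) \<and> ?k \<gamma> = ?k \<beta> + l * (int a * int p))"
    using assms m by (intro standard_solutions_differ_by_step)
      (auto simp: exps_of_degree_def degrees_of_standard_exp standard_exp_def)
  then obtain l where l: "Poly_Mapping.lookup \<gamma> 0 = Poly_Mapping.lookup \<beta> 0"
    "?j \<gamma> = ?j \<beta> + l * (int a * int q)" "?k \<gamma> = ?k \<beta> + l * (int a * int p)"
    by auto
  have eq_iff: "\<delta> = \<alpha> + invariant_exp a p q t \<longleftrightarrow>
      Poly_Mapping.lookup \<delta> 1 = Poly_Mapping.lookup \<alpha> 1 + t * (a * q) \<and>
      Poly_Mapping.lookup \<delta> 3 = Poly_Mapping.lookup \<alpha> 3 + t * (a * p)"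
    if "standard_exp (q - p) \<alpha>" "standard_exp (q - p) \<delta>"
       "Poly_Mapping.lookup \<delta> 0 = Poly_Mapping.lookup \<alpha> 0" for \<alpha> \<delta> t
  proof
    assume "Poly_Mapping.lookup \<delta> 1 = Poly_Mapping.lookup \<alpha> 1 + t * (a * q) \<and>
      Poly_Mapping.lookup \<delta> 3 = Poly_Mapping.lookup \<alpha> 3 + t * (a * p)"
    then show "\<delta> = \<alpha> + invariant_exp a p q t"
      using that by (intro mono5_eqI) (auto simp: standard_exp_def lookup_add lookup_invariant_exp)
  qed (simp add: lookup_add lookup_invariant_exp)
  show ?thesis
  proof (cases "0 \<le> l")
    case True
    then obtain t where "l = int t"
      by (metis nonneg_int_cases)
    then have "\<gamma> = \<beta> + invariant_exp a p q t"
      using l assms by (subst eq_iff) (simp_all flip: of_nat_mult of_nat_add)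
    then show ?thesis by blast
  next
    case False
    then obtain t where "l = - int t"
      by (metis nonneg_int_cases neg_0_le_iff_le nle_le minus_minus)
    then have "\<beta> = \<gamma> + invariant_exp a p q t"
      using l assms by (subst eq_iff) (simp_all add: eq_diff_eq[symmetric] flip: of_nat_mult of_nat_add)
    then show ?thesis by blast
  qed
qed

lemma standard_exps_of_degree_form_ray:
  assumes "0 < p" and "p < q" and "0 < a" and "m = a * (q - p)"
  obtains v where "standard_exp (q - p) v" "v \<in> exps_of_degree p q m n d"
    and "\<And>\<beta>. standard_exp (q - p) \<beta> \<Longrightarrow> \<beta> \<in> exps_of_degree p q m n d \<Longrightarrow>
           \<exists>t. \<beta> = v + invariant_exp a p q t"
    and "\<And>\<beta>. v \<noteq> \<beta> + invariant_exp a p q 1"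
proof -
  let ?S = "\<lambda>\<beta>. standard_exp (q - p) \<beta> \<and> \<beta> \<in> exps_of_degree p q m n d"
  obtain v where v: "?S v" and least: "\<And>\<beta>. ?S \<beta> \<Longrightarrow> Poly_Mapping.lookup v 1 \<le> Poly_Mapping.lookup \<beta> 1"
    using ex_has_least_nat[of ?S _ "\<lambda>\<beta>. Poly_Mapping.lookup \<beta> 1"]
      standard_exp_of_degree_exists[OF assms] by metis
  have step_pos: "0 < a * q"
    using assms by simp
  show ?thesis
  proof (rule that)
    show "standard_exp (q - p) v" "v \<in> exps_of_degree p q m n d"
      using v by simp_all
  next
    fix \<beta> assume \<beta>: "standard_exp (q - p) \<beta>" "\<beta> \<in> exps_of_degree p q m n d"
    then obtain t where "\<beta> = v + invariant_exp a p q t \<or> v = \<beta> + invariant_exp a p q t"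
      using standard_exps_of_degree_differ_by_invariant[OF assms(2,4)] v by blast
    moreover have "t = 0" if "v = \<beta> + invariant_exp a p q t"
      using least[of \<beta>] \<beta> step_pos that by (auto simp: lookup_add lookup_invariant_exp)
    ultimately show "\<exists>t. \<beta> = v + invariant_exp a p q t"
      by (metis add_0_right invariant_exp_0)
  next
    fix \<beta> show "v \<noteq> \<beta> + invariant_exp a p q 1"
    proof
      assume v_eq: "v = \<beta> + invariant_exp a p q 1"
      then have "?S \<beta>"
        using v assms by (simp add: standard_exp_add_invariant_exp_iff add_invariant_exp_of_degree_iff)
      then show False
        using least[of \<beta>] step_pos v_eq by (simp add: lookup_add lookup_invariant_exp)
    qed
  qed
qed

definition J_generators :: "nat \<Rightarrow> nat \<Rightarrow> nat \<Rightarrow> complex \<Rightarrow> poly5 list" where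
  "J_generators p q a s = [X 0 ^ (q - p), X 2, X 4, Cst s - X 1 ^ (a * q) * X 3 ^ (a * p)]"

lemma binomial_generator_eq:
  "Cst s - X 1 ^ (a * q) * X 3 ^ (a * p) =
     Poly_Mapping.single 0 s - Poly_Mapping.single (invariant_exp a p q 1) 1"
  by (simp add: Cst_def X_power mult_single invariant_exp_def)

lemma nonstandard_monomial_in_J:
  assumes "\<not> standard_exp (q - p) \<beta>"
  shows "Poly_Mapping.single \<beta> c \<in> gen_ideal (J_generators p q a s)"
proof -
  obtain k e where "e \<le> Poly_Mapping.lookup \<beta> k" and "X k ^ e \<in> set (J_generators p q a s)"
  proof -
    consider "q - p \<le> Poly_Mapping.lookup \<beta> 0" | "1 \<le> Poly_Mapping.lookup \<beta> 2"
      | "1 \<le> Poly_Mapping.lookup \<beta> 4"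
      using assms by (force simp: standard_exp_def)
    then show thesis
      by cases (auto intro: that simp: J_generators_def)
  qed
  moreover obtain \<gamma> where "\<beta> = \<gamma> + Poly_Mapping.single k e"
    using exists_add_single_if_le_lookup[OF \<open>e \<le> Poly_Mapping.lookup \<beta> k\<close>] by blast
  then have "Poly_Mapping.single \<beta> c = Poly_Mapping.single \<gamma> c * X k ^ e"
    by (simp add: X_power mult_single)
  ultimately show ?thesis
    by (simp add: gen_ideal_mult_left gen_ideal_generator)
qed

lemma ray_monomial_congruent:
  "Poly_Mapping.single (v + invariant_exp a p q t) c - Poly_Mapping.single v (c * s ^ t)
     \<in> gen_ideal (J_generators p q a s)"
proof (induction t arbitrary: c)
  case 0
  then show ?case
    by (simp add: gen_ideal_zero)
next
  case (Suc t)
  let ?M = "invariant_exp a p q"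
  have "Poly_Mapping.single (v + ?M t) c * (Cst s - X 1 ^ (a * q) * X 3 ^ (a * p))
          \<in> gen_ideal (J_generators p q a s)"
    by (intro gen_ideal_mult_left gen_ideal_generator) (simp add: J_generators_def)
  moreover have "Poly_Mapping.single (v + ?M t) c * (Cst s - X 1 ^ (a * q) * X 3 ^ (a * p)) =
      Poly_Mapping.single (v + ?M t) (c * s) - Poly_Mapping.single (v + ?M (Suc t)) c"
    unfolding binomial_generator_eq right_diff_distrib mult_single Suc_eq_plus1 invariant_exp_add
    by (simp add: add.assoc)
  ultimately have "Poly_Mapping.single (v + ?M t) (c * s) - Poly_Mapping.single (v + ?M (Suc t)) c
      \<in> gen_ideal (J_generators p q a s)"
    by simp
  from gen_ideal_diff[OF Suc.IH[of "c * s"] this] show ?case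
    by (simp add: mult.assoc)
qed

lemma graded_piece_spanned_mod_J:
  assumes ray: "\<And>\<beta>. standard_exp (q - p) \<beta> \<Longrightarrow> \<beta> \<in> exps_of_degree p q m n d \<Longrightarrow>
                  \<exists>t. \<beta> = v + invariant_exp a p q t"
    and f: "f \<in> graded_piece p q m n d"
  shows "\<exists>c. f - Cst c * Poly_Mapping.single v 1 \<in> gen_ideal (J_generators p q a s)"
proof -
  let ?J = "gen_ideal (J_generators p q a s)"
  have "\<exists>c. Poly_Mapping.single \<alpha> (Poly_Mapping.lookup f \<alpha>) - Poly_Mapping.single v c \<in> ?J"
    if \<alpha>: "\<alpha> \<in> Poly_Mapping.keys f" for \<alpha>
  proof (cases "standard_exp (q - p) \<alpha>")
    case True
    then obtain t where "\<alpha> = v + invariant_exp a p q t"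
      using ray f \<alpha> by (auto simp: graded_piece_eq)
    then show ?thesis
      using ray_monomial_congruent by blast
  next
    case False
    then show ?thesis
      using nonstandard_monomial_in_J[OF False] by (metis diff_zero single_zero)
  qed
  then obtain c where c: "\<And>\<alpha>. \<alpha> \<in> Poly_Mapping.keys f \<Longrightarrow>
      Poly_Mapping.single \<alpha> (Poly_Mapping.lookup f \<alpha>) - Poly_Mapping.single v (c \<alpha>) \<in> ?J"
    by metis
  have "Poly_Mapping.single v (sum c A) = (\<Sum>\<alpha>\<in>A. Poly_Mapping.single v (c \<alpha>))" for A
    by (induction A rule: infinite_finite_induct) (simp_all add: single_add)
  then have "f - Cst (sum c (Poly_Mapping.keys f)) * Poly_Mapping.single v 1 =
      (\<Sum>\<alpha>\<in>Poly_Mapping.keys f.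
         Poly_Mapping.single \<alpha> (Poly_Mapping.lookup f \<alpha>) - Poly_Mapping.single v (c \<alpha>))"
    by (simp add: Cst_def mult_single sum_subtractf sum_single_lookup)
  moreover have "(\<Sum>\<alpha>\<in>Poly_Mapping.keys f.
      Poly_Mapping.single \<alpha> (Poly_Mapping.lookup f \<alpha>) - Poly_Mapping.single v (c \<alpha>)) \<in> ?J"
    using c by (rule gen_ideal_sum)
  ultimately show ?thesis
    by (intro exI[of _ "sum c (Poly_Mapping.keys f)"]) simp
qed

lemma inj_invariant_ray:
  assumes "0 < a" and "0 < q"
  shows "inj (\<lambda>t. v + invariant_exp a p q t)"
proof
  fix t u assume "v + invariant_exp a p q t = v + invariant_exp a p q u"
  then have "Poly_Mapping.lookup (invariant_exp a p q t) 1 = Poly_Mapping.lookup (invariant_exp a p q u) 1"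
    by simp
  then show "t = u"
    using assms by (simp add: lookup_invariant_exp)
qed

lemma ray_weight_annihilates_J:
  assumes "0 < a" and "0 < q" and "standard_exp (q - p) v"
    and start: "\<And>\<beta>. v \<noteq> \<beta> + invariant_exp a p q 1"
    and x: "x \<in> gen_ideal (J_generators p q a s)"
  shows "coeff_pairing (geometric_weight (\<lambda>t. v + invariant_exp a p q t) s) x = 0"
proof -
  let ?\<rho> = "\<lambda>t. v + invariant_exp a p q t"
  let ?w = "geometric_weight ?\<rho> s"
  have off_ray: "?w (\<beta> + Poly_Mapping.single k e) = 0"
    if "Poly_Mapping.lookup v k < e" "k \<noteq> 1" "k \<noteq> 3" for \<beta> k e
  proof -
    have "Poly_Mapping.lookup (\<beta> + Poly_Mapping.single k e) k \<noteq> Poly_Mapping.lookup (?\<rho> t) k" for t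
      using that by (simp add: lookup_add lookup_invariant_exp)
    then have "\<beta> + Poly_Mapping.single k e \<notin> range ?\<rho>"
      by (metis rangeE)
    then show ?thesis
      by (rule geometric_weight_off_ray)
  qed
  have monomial: "coeff_pairing ?w (r * X k ^ e) = 0"
    if "Poly_Mapping.lookup v k < e" "k \<noteq> 1" "k \<noteq> 3" for r k e
    unfolding X_power by (rule coeff_pairing_mult_monomial_eq_0) (rule off_ray[OF that])
  have step: "?\<rho> (Suc t) = ?\<rho> t + invariant_exp a p q 1" for t
    unfolding Suc_eq_plus1 invariant_exp_add by (simp add: add.assoc)
  have binomial: "coeff_pairing ?w (r * (Cst s - X 1 ^ (a * q) * X 3 ^ (a * p))) = 0" for r
    unfolding binomial_generator_eq using start
    by (intro coeff_pairing_mult_binomial_eq_0 geometric_weight_shift inj_invariant_ray assms(1,2) step)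
      simp
  have "coeff_pairing ?w (r * X 0 ^ (q - p)) = 0" "coeff_pairing ?w (r * X 2) = 0"
    "coeff_pairing ?w (r * X 4) = 0" for r
    using monomial[of 0 "q - p" r] monomial[of 2 1 r] monomial[of 4 1 r] \<open>standard_exp (q - p) v\<close>
    by (simp_all add: standard_exp_def)
  with binomial show ?thesis
    by (intro additive_vanishes_on_gen_ideal[OF additive_coeff_pairing _ x]) (auto simp: J_generators_def)
qed

lemma ray_base_independent_mod_J:
  assumes "0 < a" and "0 < q" and "standard_exp (q - p) v"
    and "\<And>\<beta>. v \<noteq> \<beta> + invariant_exp a p q 1"
    and "Cst c * Poly_Mapping.single v 1 \<in> gen_ideal (J_generators p q a s)"
  shows "c = 0"
proof -
  have "geometric_weight (\<lambda>t. v + invariant_exp a p q t) s v = 1"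
    using geometric_weight_on_ray[OF inj_invariant_ray[OF assms(1,2)], where s = s and t = 0]
    by simp
  then show ?thesis
    using ray_weight_annihilates_J[OF assms] by (simp add: Cst_def mult_single)
qed

theorem theorem4p2:
  fixes p q m a :: nat and s :: complex and n d :: int
  assumes "0 < p" and "p < q" and "coprime p q" and "0 < m"
    and "(q - p) dvd m" and "a = m div (q - p)"
  shows "quot_dim_eq (graded_piece p q m n d)
           (gen_ideal [X 0 ^ (q - p), X 2, X 4, Cst s - X 1 ^ (a * q) * X 3 ^ (a * p)]) 1"
proof -
  have m: "m = a * (q - p)"
    using assms(5,6) by simp
  then have "0 < a"
    using assms(4) by (cases a) auto
  obtain v where v: "standard_exp (q - p) v" "v \<in> exps_of_degree p q m n d"
    and ray: "\<And>\<beta>. standard_exp (q - p) \<beta> \<Longrightarrow> \<beta> \<in> exps_of_degree p q m n d \<Longrightarrow>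
                 \<exists>t. \<beta> = v + invariant_exp a p q t"
    and start: "\<And>\<beta>. v \<noteq> \<beta> + invariant_exp a p q 1"
    using standard_exps_of_degree_form_ray[OF assms(1,2) \<open>0 < a\<close> m] by blast
  have "quot_dim_eq (graded_piece p q m n d) (gen_ideal (J_generators p q a s)) 1"
  proof (rule quot_dim_eq_oneI)
    show "Poly_Mapping.single v 1 \<in> graded_piece p q m n d"
      using v(2) by (simp add: graded_piece_eq)
    show "\<exists>c. f - Cst c * Poly_Mapping.single v 1 \<in> gen_ideal (J_generators p q a s)"
      if "f \<in> graded_piece p q m n d" for f
      using graded_piece_spanned_mod_J[OF ray that] by blast
    show "c = 0" if "Cst c * Poly_Mapping.single v 1 \<in> gen_ideal (J_generators p q a s)" for c
      using ray_base_independent_mod_J[OF \<open>0 < a\<close> _ v(1) start that] assms(2) by simp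
  qed
  then show ?thesis
    by (simp add: J_generators_def)
qed

end
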